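(* Let $F$ be a graph (2-uniform) and let $\epsilon > 0$. Then there exist $n_0$ and $\delta > 0$ (depending only on $\epsilon$ and $F$) such that the following holds. Let $V$ be a vertex set of size $n = |V| > n_0$. If $G = (V,E)$ is a graph with $|E| = \mathrm{ex}^*(n,F) + \epsilon\binom{n}{2}$ edges, then for every set of edges $E_0 \subset V^{(2)} \setminus E$ there exists a subset $X \subset E$ such that the graph $(V, E_0 \cup X)$ contains at least $\delta n^{|F|}$ induced copies of $F$.
   Context: $V^{(2)}$ denotes the set of 2-element subsets of $V$, and $|F|$ is the number of vertices of $F$. For an $n$-vertex set $V$, $\mathrm{ex}^*(n,F)$ is the maximum of $|E|$ over all graphs $G=(V,E)$ for which there exists an edge set $E_0 \subset V^{(2)}$ with $E \cap E_0 = \emptyset$ such that for every $X \subset E$ the graph $(V, E_0 \cup X)$ contains no induced subgraph isomorphic to $F$. *)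

theory Defs
  imports Complex_Main
begin

definition pairs :: "'a set \<Rightarrow> 'a set set" where
  "pairs V = {e. e \<subseteq> V \<and> card e = 2}"

definition has_induced_copy :: "'b set \<Rightarrow> 'b set set \<Rightarrow> 'a set \<Rightarrow> 'a set set \<Rightarrow> bool" where
  "has_induced_copy VF EF V E \<longleftrightarrow>
     (\<exists>f. inj_on f VF \<and> f ` VF \<subseteq> V \<and>
          (\<forall>x\<in>VF. \<forall>y\<in>VF. {x, y} \<in> EF \<longleftrightarrow> {f x, f y} \<in> E))"

definition induced_copies :: "'b set \<Rightarrow> 'b set set \<Rightarrow> 'a set \<Rightarrow> 'a set set \<Rightarrow> 'a set set" where
  "induced_copies VF EF V E =
     {S. S \<subseteq> V \<and> (\<exists>f. bij_betw f VF S \<and>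
          (\<forall>x\<in>VF. \<forall>y\<in>VF. {x, y} \<in> EF \<longleftrightarrow> {f x, f y} \<in> E))}"

text \<open>ex*(n,F), taken on the n-vertex set {0..<n} (the value only depends on n).\<close>
definition exstar :: "nat \<Rightarrow> 'b set \<Rightarrow> 'b set set \<Rightarrow> nat" where
  "exstar n VF EF = Max {card E | E. E \<subseteq> pairs {..<n} \<and>
      (\<exists>E0. E0 \<subseteq> pairs {..<n} \<and> E \<inter> E0 = {} \<and>
         (\<forall>X. X \<subseteq> E \<longrightarrow> \<not> has_induced_copy VF EF {..<n} (E0 \<union> X)))}"

end

theory Submission
  imports Defs
begin

text \<open>Let \<open>a n = ex*(n,F) / (n choose 2)\<close>. Since \<open>a\<close> is bounded below, there is
  \<open>m \<ge> max 2 |F|\<close> with \<open>a m < a n + \<epsilon>/2\<close> for all \<open>n \<ge> max 2 |F|\<close>. A graph on \<open>n > m\<close> vertices with \<open>ex*(n,F) + \<epsilon> (n choose 2)\<close> edges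
  then has edge density at least \<open>a m + \<epsilon>/2\<close>, so by averaging a proportion \<open>\<epsilon>/2\<close> of its
  \<open>m\<close>-subsets \<open>U\<close> span more than \<open>ex*(m,F)\<close> edges. For each such \<open>U\<close> the definition of
  \<open>ex*\<close> yields \<open>X\<^sub>U \<subseteq> E \<inter> pairs U\<close> with an induced copy of \<open>F\<close> in
  \<open>(U, E0 \<inter> pairs U \<union> X\<^sub>U)\<close>. A uniformly random \<open>X \<subseteq> E\<close> agrees with \<open>X\<^sub>U\<close> on \<open>pairs U\<close> with
  probability at least \<open>2 ^ - (m choose 2)\<close>, while an induced copy lies in only
  \<open>(n - |F|) choose (m - |F|)\<close> of the sets \<open>U\<close>; hence some \<open>X\<close> yields \<open>\<delta> n ^ |F|\<close> induced copies.\<close>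

lemma finite_pairs: "finite V \<Longrightarrow> finite (pairs V)"
  unfolding pairs_def by simp

lemma card_pairs: "finite V \<Longrightarrow> card (pairs V) = card V choose 2"
  unfolding pairs_def by (rule n_subsets)

lemma finite_subset_pairs: "finite V \<Longrightarrow> E \<subseteq> pairs V \<Longrightarrow> finite E"
  using finite_pairs finite_subset by blast

lemma card_supersets:
  assumes "finite V" "A \<subseteq> V" "card A \<le> m"
  shows "card {U. U \<subseteq> V \<and> card U = m \<and> A \<subseteq> U} = (card V - card A) choose (m - card A)"
proof -
  have fA: "finite A" using assms finite_subset by blast
  have "{U. U \<subseteq> V \<and> card U = m \<and> A \<subseteq> U} = (\<lambda>B. B \<union> A) ` {B. B \<subseteq> V - A \<and> card B = m - card A}"
  proof (intro set_eqI iffI)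
    fix U assume U: "U \<in> {U. U \<subseteq> V \<and> card U = m \<and> A \<subseteq> U}"
    then have "card (U - A) = m - card A" "U = (U - A) \<union> A"
      using assms fA by (auto simp: card_Diff_subset)
    then show "U \<in> (\<lambda>B. B \<union> A) ` {B. B \<subseteq> V - A \<and> card B = m - card A}"
      using U by blast
  next
    fix U assume "U \<in> (\<lambda>B. B \<union> A) ` {B. B \<subseteq> V - A \<and> card B = m - card A}"
    then obtain B where B: "B \<subseteq> V - A" "card B = m - card A" "U = B \<union> A" by auto
    then have "card U = card B + card A"
      using assms fA by (metis Diff_disjoint card_Un_disjoint disjoint_iff_not_equal finite_Diff finite_subset subsetD)
    then show "U \<in> {U. U \<subseteq> V \<and> card U = m \<and> A \<subseteq> U}" using B assms by auto
  qed
  moreover have "inj_on (\<lambda>B. B \<union> A) {B. B \<subseteq> V - A \<and> card B = m - card A}"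
    by (rule inj_onI) blast
  ultimately have "card {U. U \<subseteq> V \<and> card U = m \<and> A \<subseteq> U} = card (V - A) choose (m - card A)"
    using assms(1) by (simp add: card_image n_subsets)
  then show ?thesis using assms(2) fA by (simp add: card_Diff_subset)
qed

lemma card_subsets_Int_eq:
  assumes "finite E" "B \<subseteq> E \<inter> A"
  shows "card {X. X \<subseteq> E \<and> X \<inter> A = B} = 2 ^ card (E - A)"
proof -
  have "{X. X \<subseteq> E \<and> X \<inter> A = B} = (\<lambda>Y. Y \<union> B) ` Pow (E - A)"
  proof (intro set_eqI iffI)
    fix X assume "X \<in> {X. X \<subseteq> E \<and> X \<inter> A = B}"
    then have "X = (X - A) \<union> B" "X - A \<in> Pow (E - A)" by auto
    then show "X \<in> (\<lambda>Y. Y \<union> B) ` Pow (E - A)" by blast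
  qed (use assms in auto)
  moreover have "inj_on (\<lambda>Y. Y \<union> B) (Pow (E - A))"
    using assms by (intro inj_onI) blast
  ultimately show ?thesis using assms(1) by (simp add: card_image card_Pow)
qed

lemma card_subsets_agreeing_on_pairs_ge:
  assumes fE: "finite E" and fU: "finite U" and B: "B \<subseteq> E \<inter> pairs U"
  shows "2 ^ card E \<le> card {X\<in>Pow E. X \<inter> pairs U = B} * 2 ^ (card U choose 2)"
proof -
  have "card (E \<inter> pairs U) \<le> card (pairs U)"
    using fU by (intro card_mono) (auto simp: finite_pairs)
  then have "card E \<le> card (E - pairs U) + (card U choose 2)"
    using card_Int_Diff[OF fE, of "pairs U"] card_pairs[OF fU] by simp
  then have "(2::nat) ^ card E \<le> 2 ^ card (E - pairs U) * 2 ^ (card U choose 2)"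
    by (simp add: power_add[symmetric] power_increasing)
  moreover have "{X\<in>Pow E. X \<inter> pairs U = B} = {X. X \<subseteq> E \<and> X \<inter> pairs U = B}" by auto
  ultimately show ?thesis using card_subsets_Int_eq[OF fE B] by simp
qed

lemma has_induced_copy_bij_betw:
  assumes g: "bij_betw g W W'" and edges: "\<forall>a\<in>W. \<forall>b\<in>W. {a, b} \<in> H \<longleftrightarrow> {g a, g b} \<in> H'"
    and copy: "has_induced_copy VF EF W' H'"
  shows "has_induced_copy VF EF W H"
proof -
  obtain f where f: "inj_on f VF" "f ` VF \<subseteq> W'"
    "\<forall>x\<in>VF. \<forall>y\<in>VF. {x, y} \<in> EF \<longleftrightarrow> {f x, f y} \<in> H'"
    using copy unfolding has_induced_copy_def by blast
  define h where "h = inv_into W g"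
  have h: "bij_betw h W' W" "\<And>z. z \<in> W' \<Longrightarrow> g (h z) = z"
    using g unfolding h_def by (auto simp: bij_betw_inv_into bij_betw_inv_into_right)
  have "inj_on (h \<circ> f) VF"
    using f h by (meson bij_betw_def comp_inj_on inj_on_subset)
  moreover have hf: "(h \<circ> f) ` VF \<subseteq> W" using f h bij_betw_imp_surj_on by fastforce
  moreover have "\<forall>x\<in>VF. \<forall>y\<in>VF. {x, y} \<in> EF \<longleftrightarrow> {(h \<circ> f) x, (h \<circ> f) y} \<in> H"
    using edges f hf h(2) by (auto simp: image_subset_iff)
  ultimately show ?thesis unfolding has_induced_copy_def by blast
qed

lemma no_induced_copy_image:
  assumes g: "bij_betw g W W'" and E: "E \<subseteq> pairs W" and E0: "E0 \<subseteq> pairs W"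
    and no_copy: "\<forall>X. X \<subseteq> E \<longrightarrow> \<not> has_induced_copy VF EF W (E0 \<union> X)"
  shows "\<forall>X. X \<subseteq> image g ` E \<longrightarrow> \<not> has_induced_copy VF EF W' (image g ` E0 \<union> X)"
proof (intro allI impI notI)
  fix X assume X: "X \<subseteq> image g ` E" and copy: "has_induced_copy VF EF W' (image g ` E0 \<union> X)"
  define X' where "X' = {e\<in>E. g ` e \<in> X}"
  have "X' \<subseteq> E" unfolding X'_def by blast
  have "image g ` X' = X" using X unfolding X'_def by blast
  have inj_img: "inj_on (image g) (Pow W)"
    using g by (simp add: bij_betw_def inj_on_image_Pow)
  have "has_induced_copy VF EF W (E0 \<union> X')"
  proof (rule has_induced_copy_bij_betw[OF g _ copy], intro ballI)
    fix a b assume "a \<in> W" "b \<in> W"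
    then have "{a, b} \<in> E0 \<union> X' \<longleftrightarrow> g ` {a, b} \<in> image g ` (E0 \<union> X')"
      using E E0 \<open>X' \<subseteq> E\<close> unfolding pairs_def
      by (intro inj_on_image_mem_iff[OF inj_img, symmetric]) auto
    then show "{a, b} \<in> E0 \<union> X' \<longleftrightarrow> {g a, g b} \<in> image g ` E0 \<union> X"
      using \<open>image g ` X' = X\<close> by (simp add: image_Un)
  qed
  then show False using no_copy \<open>X' \<subseteq> E\<close> by blast
qed

lemma card_le_exstar:
  assumes fW: "finite W" and E: "E \<subseteq> pairs W" and E0: "E0 \<subseteq> pairs W" and disj: "E \<inter> E0 = {}"
    and no_copy: "\<forall>X. X \<subseteq> E \<longrightarrow> \<not> has_induced_copy VF EF W (E0 \<union> X)"
  shows "card E \<le> exstar (card W) VF EF"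
proof -
  define n where "n = card W"
  obtain g where g: "bij_betw g W {..<n}"
    using ex_bij_betw_finite_nat[OF fW] unfolding n_def by (metis atLeast0LessThan)
  have inj_img: "inj_on (image g) (Pow W)"
    using g by (simp add: bij_betw_def inj_on_image_Pow)
  have img_pairs: "image g ` pairs W \<subseteq> pairs {..<n}"
    using g unfolding pairs_def bij_betw_def by (auto simp: card_image inj_on_subset)
  have PW: "pairs W \<subseteq> Pow W" unfolding pairs_def by auto
  define S where "S = {card E | E. E \<subseteq> pairs {..<n} \<and>
      (\<exists>E0. E0 \<subseteq> pairs {..<n} \<and> E \<inter> E0 = {} \<and>
         (\<forall>X. X \<subseteq> E \<longrightarrow> \<not> has_induced_copy VF EF {..<n} (E0 \<union> X)))}"
  have "image g ` E \<subseteq> pairs {..<n}" "image g ` E0 \<subseteq> pairs {..<n}"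
    using E E0 img_pairs by auto
  moreover have "image g ` E \<inter> image g ` E0 = {}"
    using inj_on_image_Int[OF inj_img] E E0 PW disj by (metis image_empty subset_trans)
  ultimately have "card (image g ` E) \<in> S"
    unfolding S_def using no_induced_copy_image[OF g E E0 no_copy] by blast
  moreover have "card (image g ` E) = card E"
    using E PW by (intro card_image inj_on_subset[OF inj_img]) auto
  moreover have "finite S"
    unfolding S_def by (rule finite_subset[of _ "card ` Pow (pairs {..<n})"]) (auto simp: finite_pairs)
  ultimately have "card E \<le> Max S" by (metis Max_ge)
  also have "Max S = exstar (card W) VF EF" unfolding exstar_def S_def n_def ..
  finally show ?thesis .
qed

lemma induced_copy_within:
  assumes copy: "has_induced_copy VF EF U (H \<inter> pairs U)" and "U \<subseteq> V"
    and H: "H \<subseteq> pairs V" and EF: "EF \<subseteq> pairs VF"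
  shows "\<exists>S\<subseteq>U. S \<in> induced_copies VF EF V H"
proof -
  obtain f where f: "inj_on f VF" "f ` VF \<subseteq> U"
    "\<forall>x\<in>VF. \<forall>y\<in>VF. {x, y} \<in> EF \<longleftrightarrow> {f x, f y} \<in> H \<inter> pairs U"
    using copy unfolding has_induced_copy_def by blast
  have "{x, y} \<in> EF \<longleftrightarrow> {f x, f y} \<in> H" if "x \<in> VF" "y \<in> VF" for x y
  proof (cases "x = y")
    case True
    then show ?thesis using EF H unfolding pairs_def by auto
  next
    case False
    then have "f x \<noteq> f y" using f(1) that by (meson inj_onD)
    then have "{f x, f y} \<in> pairs U" using f(2) that unfolding pairs_def by auto
    then show ?thesis using f(3) that by blast
  qed
  then have "f ` VF \<in> induced_copies VF EF V H"
    using f(1,2) \<open>U \<subseteq> V\<close> unfolding induced_copies_def by (blast intro: inj_on_imp_bij_betw)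
  then show ?thesis using f(2) by blast
qed

lemma card_subsets_with_induced_copy_le:
  assumes fV: "finite V" and H: "H \<subseteq> pairs V" and EF: "EF \<subseteq> pairs VF" and km: "card VF \<le> m"
  shows "card {U. U \<subseteq> V \<and> card U = m \<and> has_induced_copy VF EF U (H \<inter> pairs U)}
    \<le> card (induced_copies VF EF V H) * ((card V - card VF) choose (m - card VF))"
proof -
  let ?IC = "induced_copies VF EF V H"
  have "finite ?IC"
    by (rule finite_subset[of _ "Pow V"]) (auto simp: induced_copies_def fV)
  have "card {U. U \<subseteq> V \<and> card U = m \<and> has_induced_copy VF EF U (H \<inter> pairs U)}
      \<le> card (\<Union>S\<in>?IC. {U. U \<subseteq> V \<and> card U = m \<and> S \<subseteq> U})"
  proof (rule card_mono)
    show "finite (\<Union>S\<in>?IC. {U. U \<subseteq> V \<and> card U = m \<and> S \<subseteq> U})"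
      by (rule finite_subset[of _ "Pow V"]) (auto simp: fV)
    show "{U. U \<subseteq> V \<and> card U = m \<and> has_induced_copy VF EF U (H \<inter> pairs U)}
      \<subseteq> (\<Union>S\<in>?IC. {U. U \<subseteq> V \<and> card U = m \<and> S \<subseteq> U})"
    proof (intro subsetI, elim CollectE conjE)
      fix U assume U: "U \<subseteq> V" "card U = m" "has_induced_copy VF EF U (H \<inter> pairs U)"
      then obtain S where "S \<subseteq> U" "S \<in> ?IC" using induced_copy_within[OF _ _ H EF] by blast
      then show "U \<in> (\<Union>S\<in>?IC. {U. U \<subseteq> V \<and> card U = m \<and> S \<subseteq> U})"
        using U by blast
    qed
  qed
  also have "\<dots> \<le> (\<Sum>S\<in>?IC. card {U. U \<subseteq> V \<and> card U = m \<and> S \<subseteq> U})"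
    using \<open>finite ?IC\<close> by (rule card_UN_le)
  also have "\<dots> = (\<Sum>S\<in>?IC. (card V - card VF) choose (m - card VF))"
  proof (rule sum.cong)
    fix S assume "S \<in> ?IC"
    then have "S \<subseteq> V" "card S = card VF"
      unfolding induced_copies_def by (auto simp: bij_betw_same_card)
    then show "card {U. U \<subseteq> V \<and> card U = m \<and> S \<subseteq> U} = (card V - card VF) choose (m - card VF)"
      using card_supersets[OF fV] km by simp
  qed simp
  finally show ?thesis by simp
qed

lemma sum_card_Int_pairs:
  assumes fV: "finite V" and E: "E \<subseteq> pairs V" and m: "2 \<le> m"
  shows "(\<Sum>U | U \<subseteq> V \<and> card U = m. card (E \<inter> pairs U)) = card E * ((card V - 2) choose (m - 2))"
proof -
  let ?UU = "{U. U \<subseteq> V \<and> card U = m}"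
  have "(\<Sum>U\<in>?UU. card (E \<inter> pairs U)) = (\<Sum>U\<in>?UU. card {e\<in>E. e \<subseteq> U})"
    using E unfolding pairs_def by (intro sum.cong arg_cong[where f=card]) auto
  also have "\<dots> = (\<Sum>e\<in>E. card {U\<in>?UU. e \<subseteq> U})"
    using fV finite_subset_pairs[OF fV E] by (intro sum_multicount_gen) auto
  also have "\<dots> = (\<Sum>e\<in>E. (card V - 2) choose (m - 2))"
  proof (rule sum.cong)
    fix e assume "e \<in> E"
    then have "e \<subseteq> V" "card e = 2" using E unfolding pairs_def by auto
    then show "card {U\<in>?UU. e \<subseteq> U} = (card V - 2) choose (m - 2)"
      using card_supersets[OF fV] m by (simp add: conj_assoc)
  qed simp
  finally show ?thesis by simp
qed

lemma card_dense_subsets_ge: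
  fixes \<eta> :: real
  assumes fV: "finite V" and E: "E \<subseteq> pairs V" and m: "2 \<le> m" "m \<le> card V"
    and dense: "(real t / real (m choose 2) + \<eta>) * real (card V choose 2) \<le> real (card E)"
  shows "\<eta> * real (card V choose m) \<le> real (card {U. U \<subseteq> V \<and> card U = m \<and> t < card (E \<inter> pairs U)})"
proof -
  let ?UU = "{U. U \<subseteq> V \<and> card U = m}" and ?c = "m choose 2"
  let ?G = "{U. U \<subseteq> V \<and> card U = m \<and> t < card (E \<inter> pairs U)}"
  have c: "?c > 0" using m by simp
  have "(real t + \<eta> * real ?c) * real (card V choose m)
      = (real t / real ?c + \<eta>) * real (card V choose 2) * real ((card V - 2) choose (m - 2))"
    using c arg_cong[OF choose_mult[OF m(1,2)], of real] by (simp add: field_simps)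
  also have "\<dots> \<le> real (card E) * real ((card V - 2) choose (m - 2))"
    using dense by (intro mult_right_mono) auto
  also have "\<dots> = real (\<Sum>U\<in>?UU. card (E \<inter> pairs U))"
    using sum_card_Int_pairs[OF fV E m(1)] by simp
  also have "\<dots> \<le> real (\<Sum>U\<in>?UU. t + (if U \<in> ?G then ?c else 0))"
  proof (intro of_nat_mono sum_mono)
    fix U assume U: "U \<in> ?UU"
    then have "card (E \<inter> pairs U) \<le> card (pairs U)"
      using fV by (intro card_mono) (auto simp: finite_pairs finite_subset)
    also have "\<dots> = ?c" using U fV card_pairs[of U] finite_subset by auto
    finally show "card (E \<inter> pairs U) \<le> t + (if U \<in> ?G then ?c else 0)" using U by auto
  qed
  also have "\<dots> = real (card V choose m) * real t + real (card ?G) * real ?c"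
    using fV by (simp add: sum.distrib sum.If_cases n_subsets Int_def conj_assoc)
  finally have "\<eta> * real (card V choose m) * real ?c \<le> real (card ?G) * real ?c"
    by (simp add: algebra_simps)
  then show ?thesis using c by simp
qed

lemma ex_subset_many_induced_copies:
  assumes fV: "finite V" and E: "E \<subseteq> pairs V" and E0: "E0 \<subseteq> pairs V" and EF: "EF \<subseteq> pairs VF"
    and km: "card VF \<le> m" and G: "G \<subseteq> {U. U \<subseteq> V \<and> card U = m}"
    and local_copy: "\<And>U. U \<in> G \<Longrightarrow>
      \<exists>X\<^sub>U \<subseteq> E \<inter> pairs U. has_induced_copy VF EF U (E0 \<inter> pairs U \<union> X\<^sub>U)"
  shows "\<exists>X\<subseteq>E. card G \<le> 2 ^ (m choose 2) * ((card V - card VF) choose (m - card VF))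
                          * card (induced_copies VF EF V (E0 \<union> X))"
proof -
  let ?C = "(card V - card VF) choose (m - card VF)"
  let ?N = "\<lambda>X. card (induced_copies VF EF V (E0 \<union> X))"
  obtain XU where XU: "\<And>U. U \<in> G \<Longrightarrow>
      XU U \<subseteq> E \<inter> pairs U \<and> has_induced_copy VF EF U (E0 \<inter> pairs U \<union> XU U)"
    using local_copy by metis
  let ?agree = "\<lambda>U X. X \<inter> pairs U = XU U"
  have fE: "finite E" using fV E by (rule finite_subset_pairs)
  have fG: "finite G" using G fV by (auto intro: finite_subset[of _ "Pow V"])
  have per_U: "2 ^ card E \<le> card {X\<in>Pow E. ?agree U X} * 2 ^ (m choose 2)" if U: "U \<in> G" for U
    using card_subsets_agreeing_on_pairs_ge[OF fE _ conjunct1[OF XU[OF U]]] U G fV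
    by (auto intro: finite_subset)
  have per_X: "card {U\<in>G. ?agree U X} \<le> ?N X * ?C" if "X \<subseteq> E" for X
  proof -
    have "{U\<in>G. ?agree U X}
        \<subseteq> {U. U \<subseteq> V \<and> card U = m \<and> has_induced_copy VF EF U ((E0 \<union> X) \<inter> pairs U)}"
      using G XU by (auto simp: Int_Un_distrib2)
    then have "card {U\<in>G. ?agree U X}
        \<le> card {U. U \<subseteq> V \<and> card U = m \<and> has_induced_copy VF EF U ((E0 \<union> X) \<inter> pairs U)}"
      using fV by (intro card_mono) (auto intro: finite_subset[of _ "Pow V"])
    also have "\<dots> \<le> ?N X * ?C"
      using E0 E \<open>X \<subseteq> E\<close> by (intro card_subsets_with_induced_copy_le[OF fV _ EF km]) auto
    finally show ?thesis .
  qed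
  have "card G * 2 ^ card E = (\<Sum>U\<in>G. 2 ^ card E)" by simp
  also have "\<dots> \<le> (\<Sum>U\<in>G. card {X\<in>Pow E. ?agree U X} * 2 ^ (m choose 2))"
    using per_U by (rule sum_mono)
  also have "\<dots> = (\<Sum>U\<in>G. card {X\<in>Pow E. ?agree U X}) * 2 ^ (m choose 2)"
    by (rule sum_distrib_right[symmetric])
  also have "(\<Sum>U\<in>G. card {X\<in>Pow E. ?agree U X}) = (\<Sum>X\<in>Pow E. card {U\<in>G. ?agree U X})"
    using fG fE by (intro sum_multicount_gen) auto
  also have "\<dots> \<le> (\<Sum>X\<in>Pow E. ?N X * ?C)"
    using per_X by (intro sum_mono) auto
  finally have count: "card G * 2 ^ card E \<le> (\<Sum>X\<in>Pow E. 2 ^ (m choose 2) * ?C * ?N X)"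
    by (simp add: sum_distrib_left sum_distrib_right mult_ac)
  show ?thesis
  proof (rule ccontr)
    assume "\<not> ?thesis"
    then have "(\<Sum>X\<in>Pow E. 2 ^ (m choose 2) * ?C * ?N X) < (\<Sum>X\<in>Pow E. card G)"
      using fE by (intro sum_strict_mono) (auto simp: not_le)
    with count show False by (simp add: card_Pow fE mult.commute)
  qed
qed

lemma of_nat_power_le_binomial_mult:
  assumes "k \<le> m" "m \<le> n"
  shows "real ((n - k) choose (m - k)) * real n ^ k \<le> real (n choose m) * real (m choose k) * real k ^ k"
proof -
  have "real n ^ k \<le> real (n choose k) * real k ^ k"
  proof (cases "k = 0")
    case False
    then show ?thesis
      using binomial_ge_n_over_k_pow_k[of k n] assms by (simp add: power_divide divide_le_eq)
  qed simp
  then have "real ((n - k) choose (m - k)) * real n ^ k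
      \<le> real (n choose k) * real ((n - k) choose (m - k)) * real k ^ k"
    by (metis mult.assoc mult.commute mult_left_mono of_nat_0_le_iff)
  also have "real (n choose k) * real ((n - k) choose (m - k)) = real (n choose m) * real (m choose k)"
    using arg_cong[OF choose_mult[OF assms], of real] by simp
  finally show ?thesis .
qed

lemma ex_subset_many_induced_copies_of_dense:
  fixes \<eta> :: real
  assumes fV: "finite V" and E: "E \<subseteq> pairs V" and E0: "E0 \<subseteq> pairs V - E" and EF: "EF \<subseteq> pairs VF"
    and m: "2 \<le> m" "card VF \<le> m" "m \<le> card V" and "\<eta> > 0"
    and dense: "(real (exstar m VF EF) / real (m choose 2) + \<eta>) * real (card V choose 2) \<le> real (card E)"
  shows "\<exists>X\<subseteq>E. \<eta> * real (card V) ^ card VF \<le> 2 ^ (m choose 2) * real (m choose card VF)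
                                 * real (card VF) ^ card VF * real (card (induced_copies VF EF V (E0 \<union> X)))"
proof -
  let ?k = "card VF" and ?n = "card V"
  let ?C = "(?n - ?k) choose (m - ?k)"
  let ?G = "{U. U \<subseteq> V \<and> card U = m \<and> exstar m VF EF < card (E \<inter> pairs U)}"
  have many: "\<eta> * real (?n choose m) \<le> real (card ?G)"
    using card_dense_subsets_ge[OF fV E m(1,3) dense] .
  have local_copy: "\<exists>X\<^sub>U \<subseteq> E \<inter> pairs U. has_induced_copy VF EF U (E0 \<inter> pairs U \<union> X\<^sub>U)"
    if U: "U \<in> ?G" for U
  proof (rule ccontr)
    assume "\<not> ?thesis"
    then have no_copy: "\<forall>X. X \<subseteq> E \<inter> pairs U \<longrightarrow> \<not> has_induced_copy VF EF U (E0 \<inter> pairs U \<union> X)"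
      by blast
    have "finite U" using U fV finite_subset by blast
    moreover have "(E \<inter> pairs U) \<inter> (E0 \<inter> pairs U) = {}" using E0 by blast
    ultimately have "card (E \<inter> pairs U) \<le> exstar (card U) VF EF"
      using card_le_exstar[OF _ _ _ _ no_copy] by blast
    then show False using U by simp
  qed
  have "E0 \<subseteq> pairs V" "?G \<subseteq> {U. U \<subseteq> V \<and> card U = m}" using E0 by auto
  from ex_subset_many_induced_copies[OF fV E this(1) EF m(2) this(2) local_copy]
  obtain X where "X \<subseteq> E" and X: "card ?G \<le> 2 ^ (m choose 2) * ?C * card (induced_copies VF EF V (E0 \<union> X))"
    by blast
  have "\<eta> * (real ?C * real ?n ^ ?k) \<le> \<eta> * (real (?n choose m) * real (m choose ?k) * real ?k ^ ?k)"
    using of_nat_power_le_binomial_mult[OF m(2,3)] \<open>\<eta> > 0\<close> by (intro mult_left_mono) auto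
  also have "\<dots> \<le> real (card ?G) * (real (m choose ?k) * real ?k ^ ?k)"
    using mult_right_mono[OF many, of "real (m choose ?k) * real ?k ^ ?k"] by (simp add: mult_ac)
  also have "\<dots> \<le> real ?C * (2 ^ (m choose 2) * real (m choose ?k) * real ?k ^ ?k
                     * real (card (induced_copies VF EF V (E0 \<union> X))))"
  proof -
    have "real (card ?G) \<le> real (2 ^ (m choose 2) * ?C * card (induced_copies VF EF V (E0 \<union> X)))"
      using X by (rule of_nat_mono)
    from mult_right_mono[OF this, of "real (m choose ?k) * real ?k ^ ?k"]
    show ?thesis by (simp add: mult_ac)
  qed
  finally have "real ?C * (\<eta> * real ?n ^ ?k) \<le> real ?C * (2 ^ (m choose 2) * real (m choose ?k)
                     * real ?k ^ ?k * real (card (induced_copies VF EF V (E0 \<union> X))))"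
    by (simp add: mult_ac)
  then have "\<eta> * real ?n ^ ?k \<le> 2 ^ (m choose 2) * real (m choose ?k)
                     * real ?k ^ ?k * real (card (induced_copies VF EF V (E0 \<union> X)))"
    by (rule mult_left_le_imp_le) (use m in simp)
  then show ?thesis using \<open>X \<subseteq> E\<close> by (intro exI[of _ X] conjI)
qed

lemma ex_almost_minimal:
  fixes a :: "nat \<Rightarrow> real"
  assumes "\<And>n. b \<le> a n" and "\<eta> > 0"
  shows "\<exists>m\<ge>K. \<forall>n\<ge>K. a m < a n + \<eta>"
proof -
  have bdd: "bdd_below (a ` {K..})" using assms(1) by (intro bdd_belowI[of _ b]) auto
  obtain m where "m \<ge> K" "a m < Inf (a ` {K..}) + \<eta>"
    using cInf_lessD[of "a ` {K..}" "Inf (a ` {K..}) + \<eta>"] assms(2) by auto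
  moreover have "Inf (a ` {K..}) \<le> a n" if "n \<ge> K" for n
    using that by (intro cInf_lower[OF _ bdd]) auto
  ultimately show ?thesis by force
qed

theorem corollary3:
  fixes VF :: "'b set" and EF :: "'b set set" and \<epsilon> :: real
  assumes "finite VF" and "EF \<subseteq> pairs VF" and "\<epsilon> > 0"
  shows "\<exists>n0::nat. \<exists>\<delta>::real. \<delta> > 0 \<and>
    (\<forall>(V::nat set) E. finite V \<and> card V > n0 \<and> E \<subseteq> pairs V \<and>
       real (card E) = real (exstar (card V) VF EF) + \<epsilon> * real (card V choose 2) \<longrightarrow>
       (\<forall>E0. E0 \<subseteq> pairs V - E \<longrightarrow>
          (\<exists>X. X \<subseteq> E \<and>
             real (card (induced_copies VF EF V (E0 \<union> X))) \<ge> \<delta> * real (card V) ^ card VF)))"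
proof -
  let ?k = "card VF"
  define a where "a n = real (exstar n VF EF) / real (n choose 2)" for n
  obtain m where m: "max 2 ?k \<le> m" and near_inf: "\<forall>n\<ge>max 2 ?k. a m < a n + \<epsilon> / 2"
    using ex_almost_minimal[of 0 a "\<epsilon> / 2" "max 2 ?k"] assms(3) unfolding a_def by auto
  define D where "D = 2 ^ (m choose 2) * real (m choose ?k) * real ?k ^ ?k"
  have "real ?k ^ ?k > 0" by (cases "?k = 0") auto
  then have "D > 0" using m by (simp add: D_def)
  show ?thesis
  proof (intro exI[of _ m] exI[of _ "\<epsilon> / 2 / D"] conjI allI impI)
    show "\<epsilon> / 2 / D > 0" using \<open>D > 0\<close> assms(3) by simp
    fix V :: "nat set" and E E0
    assume "finite V \<and> m < card V \<and> E \<subseteq> pairs V \<and>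
      real (card E) = real (exstar (card V) VF EF) + \<epsilon> * real (card V choose 2)"
      and E0: "E0 \<subseteq> pairs V - E"
    then have fV: "finite V" and mV: "m < card V" and E: "E \<subseteq> pairs V"
      and card_E: "real (card E) = (a (card V) + \<epsilon>) * real (card V choose 2)"
      using m by (auto simp: a_def field_simps)
    have "a m < a (card V) + \<epsilon> / 2" using near_inf m mV by simp
    then have "(a m + \<epsilon> / 2) * real (card V choose 2) \<le> real (card E)"
      unfolding card_E by (intro mult_right_mono) auto
    from ex_subset_many_induced_copies_of_dense[OF fV E E0 assms(2) _ _ _ _ this[unfolded a_def]]
    obtain X where "X \<subseteq> E"
      and "\<epsilon> / 2 * real (card V) ^ ?k \<le> D * real (card (induced_copies VF EF V (E0 \<union> X)))"
      using m mV assms(3) unfolding D_def by auto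
    then show "\<exists>X. X \<subseteq> E \<and> \<epsilon> / 2 / D * real (card V) ^ ?k \<le> real (card (induced_copies VF EF V (E0 \<union> X)))"
      using \<open>D > 0\<close> by (auto simp: field_simps)
  qed
qed

end
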